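(* Let $\Lambda_V$ be a countable vertex space and $\Lambda_E$ an edge space containing a distinguished element $0$ (meaning "no edge"), and let $\mathcal{G}$ be a countable, projectable space of graphs over $(\Lambda_V,\Lambda_E)$ in which every graph has a finite vertex set. Let $P$ be a probability mass function on $\mathcal{G}$ satisfying the positivity condition: for all $G \in \mathcal{G}$, $P(G) > 0$ implies $P(G') > 0$ for every $G' \in S(G)$. Then $P$ can be written in Gibbs form, i.e. there exist a constant $\psi_0$ and functions $\psi_k : \mathcal{G}^{(k)} \to \mathbb{R} \cup \{-\infty\}$, $k = 1,2,\ldots$, such that for every $G \in \mathcal{G}$, $$P(G) = \exp\Big[\psi_0 + \sum_{G' \in S_1(G)} \psi_1(G') + \sum_{G' \in S_2(G)} \psi_2(G') + \cdots\Big].$$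
   Context: A graph is a pair $G=(V,E)$ with $V \subseteq \Lambda_V$ a (finite) set of vertices and $E : V \times V \to \Lambda_E$ an edge function, with no self loops ($E(v,v)=0$). The graph with no vertices is the empty graph $\emptyset$. For $V' \subseteq V$, the subgraph of $G$ induced by $V'$ is $G(V') = (V', E|_{V' \times V'})$. $S(G) = \{G(V') : V' \subseteq V\}$ is the set of all induced subgraphs of $G$ (including the empty graph), and $S_k(G) = \{G' \in S(G) : |V(G')| = k\}$, where $V(G)$ denotes the vertex set of $G$. A graph space $\mathcal{G}$ is projectable if $G \in \mathcal{G}$ implies $G' \in \mathcal{G}$ for all $G' \in S(G)$. $\mathcal{G}^{(k)} = \{(V,E) \in \mathcal{G} : |V| = k\}$ denotes the graphs of order $k$ in $\mathcal{G}$. The convention $\exp(-\infty)=0$ is used. *)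

theory Defs
  imports "HOL-Probability.Probability_Mass_Function" "HOL-Library.Extended_Real"
    "HOL-Library.Countable_Set"
begin

text \<open>The edge function E : V x V -> Lambda_E is represented by a total function
  that is extended by 0 outside V x V, so that every graph has a unique representation.\<close>

type_synonym ('v, 'e) graph = "'v set \<times> ('v \<Rightarrow> 'v \<Rightarrow> 'e)"

definition gV :: "('v, 'e) graph \<Rightarrow> 'v set" where
  "gV G = fst G"

definition gE :: "('v, 'e) graph \<Rightarrow> 'v \<Rightarrow> 'v \<Rightarrow> 'e" where
  "gE G = snd G"

definition is_graph :: "('v, 'e::zero) graph \<Rightarrow> bool" where
  "is_graph G \<longleftrightarrow> (\<forall>v. gE G v v = 0) \<and>
     (\<forall>x y. (x \<notin> gV G \<or> y \<notin> gV G) \<longrightarrow> gE G x y = 0)"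

definition induced :: "('v, 'e::zero) graph \<Rightarrow> 'v set \<Rightarrow> ('v, 'e) graph" where
  "induced G V' = (V', \<lambda>x y. if x \<in> V' \<and> y \<in> V' then gE G x y else 0)"

definition Sub :: "('v, 'e::zero) graph \<Rightarrow> ('v, 'e) graph set" where
  "Sub G = {induced G V' | V'. V' \<subseteq> gV G}"

definition Sub_k :: "nat \<Rightarrow> ('v, 'e::zero) graph \<Rightarrow> ('v, 'e) graph set" where
  "Sub_k k G = {G' \<in> Sub G. card (gV G') = k}"

definition projectable :: "('v, 'e::zero) graph set \<Rightarrow> bool" where
  "projectable \<G> \<longleftrightarrow> (\<forall>G\<in>\<G>. \<forall>G'\<in>Sub G. G' \<in> \<G>)"

definition exp_ereal :: "ereal \<Rightarrow> real" where
  "exp_ereal x = (if x = -\<infinity> then 0 else exp (real_of_ereal x))"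

end

theory Submission
  imports Defs
begin

text \<open>Take \<open>\<psi>\<^sub>0 = ln P(\<emptyset>)\<close> and obtain the potentials by Moebius inversion over the
  vertex-count layers: \<open>\<psi>\<^sub>n(H)\<close> is \<open>ln P(H) - \<psi>\<^sub>0\<close> minus the potentials of all proper induced
  subgraphs of \<open>H\<close>, so that summing the potentials over all nonempty induced subgraphs of
  \<open>G\<close> gives back \<open>ln P(G) - \<psi>\<^sub>0\<close>. Positivity makes every induced subgraph of a graph of
  positive probability itself positive, so only finite logarithms enter there; a graph of
  probability zero receives the potential \<open>-\<infinity>\<close>, which forces the whole exponent to \<open>-\<infinity>\<close>.\<close>

function layer_mobius ::
    "(('v, 'e::zero) graph \<Rightarrow> real) \<Rightarrow> nat \<Rightarrow> ('v, 'e) graph \<Rightarrow> real" where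
  "layer_mobius f n H = f H - (\<Sum>k\<in>{1..<n}. \<Sum>G'\<in>Sub_k k H. layer_mobius f k G')"
  by pat_completeness auto
termination
  by (relation "Wellfounded.measure (\<lambda>(f, n, H). n)") auto

declare layer_mobius.simps[simp del]

lemma gV_induced [simp]: "gV (induced G V') = V'"
  by (simp add: induced_def gV_def)

lemma induced_gV_self:
  assumes "is_graph G"
  shows "induced G (gV G) = G"
  using assms unfolding is_graph_def induced_def gV_def gE_def
  by (cases G) (auto intro!: ext)

lemma self_in_Sub:
  assumes "is_graph G"
  shows "G \<in> Sub G"
  using induced_gV_self[OF assms] unfolding Sub_def by force

lemma finite_Sub_k:
  assumes "finite (gV G)"
  shows "finite (Sub_k k G)"
proof -
  have "Sub G = induced G ` Pow (gV G)"
    unfolding Sub_def by blast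
  then show ?thesis
    using assms unfolding Sub_k_def by simp
qed

lemma Sub_k_card_self:
  assumes "is_graph G" "finite (gV G)"
  shows "Sub_k (card (gV G)) G = {G}"
proof -
  have "V' = gV G" if "V' \<subseteq> gV G" "card V' = card (gV G)" for V'
    using that assms(2) card_subset_eq by blast
  then have "Sub_k (card (gV G)) G \<subseteq> {G}"
    using induced_gV_self[OF assms(1)] unfolding Sub_k_def Sub_def by force
  then show ?thesis
    using self_in_Sub[OF assms(1)] unfolding Sub_k_def by auto
qed

lemma is_graph_no_vertices:
  assumes "is_graph G" "gV G = {}"
  shows "G = ({}, \<lambda>_ _. 0)"
  using assms unfolding is_graph_def gV_def gE_def
  by (cases G) (auto intro!: ext)

lemma induced_empty: "induced G {} = ({}, \<lambda>_ _. 0)"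
  by (simp add: induced_def)

lemma sum_layer_mobius:
  assumes "is_graph G" "finite (gV G)" "gV G \<noteq> {}"
  shows "(\<Sum>k\<in>{1..card (gV G)}. \<Sum>G'\<in>Sub_k k G. layer_mobius f k G') = f G"
proof -
  define n where "n = card (gV G)"
  have "n \<ge> 1"
    using assms(2,3) by (simp add: n_def Suc_le_eq card_gt_0_iff)
  then have "{1..n} = insert n {1..<n}"
    by auto
  moreover have "layer_mobius f n G = f G - (\<Sum>k\<in>{1..<n}. \<Sum>G'\<in>Sub_k k G. layer_mobius f k G')"
    by (rule layer_mobius.simps)
  ultimately show ?thesis
    using Sub_k_card_self[OF assms(1,2)] by (simp add: n_def)
qed

lemma sum_ereal_eq_MInfty:
  fixes f :: "'a \<Rightarrow> ereal"
  assumes "finite A" "a \<in> A" "f a = -\<infinity>" "\<forall>x\<in>A. f x \<noteq> \<infinity>"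
  shows "sum f A = -\<infinity>"
proof -
  have "sum f (A - {a}) \<noteq> \<infinity>"
    using assms(4) by (simp add: sum_Pinfty)
  moreover have "sum f A = f a + sum f (A - {a})"
    using assms(1,2) by (simp add: sum.remove)
  ultimately show ?thesis
    using assms(3) by simp
qed

definition gibbs_potential ::
    "('v, 'e::zero) graph pmf \<Rightarrow> real \<Rightarrow> nat \<Rightarrow> ('v, 'e) graph \<Rightarrow> ereal" where
  "gibbs_potential P c k H =
     (if pmf P H = 0 then -\<infinity> else ereal (layer_mobius (\<lambda>H. ln (pmf P H) - c) k H))"

lemma gibbs_potential_not_PInfty: "gibbs_potential P c k H \<noteq> \<infinity>"
  by (simp add: gibbs_potential_def)

lemma gibbs_exponent_positive:
  assumes "is_graph G" "finite (gV G)" "gV G \<noteq> {}" "\<forall>G'\<in>Sub G. pmf P G' > 0"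
  shows "(\<Sum>k\<in>{1..card (gV G)}. \<Sum>G'\<in>Sub_k k G. gibbs_potential P c k G')
           = ereal (ln (pmf P G) - c)"
proof -
  have "(\<Sum>k\<in>{1..card (gV G)}. \<Sum>G'\<in>Sub_k k G. gibbs_potential P c k G')
      = (\<Sum>k\<in>{1..card (gV G)}. \<Sum>G'\<in>Sub_k k G.
           ereal (layer_mobius (\<lambda>H. ln (pmf P H) - c) k G'))"
    using assms(4) unfolding Sub_k_def gibbs_potential_def
    by (intro sum.cong refl) force
  then show ?thesis
    using sum_layer_mobius[OF assms(1-3)] by simp
qed

lemma gibbs_exponent_zero:
  assumes "is_graph G" "finite (gV G)" "gV G \<noteq> {}" "pmf P G = 0"
  shows "(\<Sum>k\<in>{1..card (gV G)}. \<Sum>G'\<in>Sub_k k G. gibbs_potential P c k G') = -\<infinity>"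
proof (rule sum_ereal_eq_MInfty)
  show "card (gV G) \<in> {1..card (gV G)}"
    using assms(2,3) by (simp add: Suc_le_eq card_gt_0_iff)
  show "(\<Sum>G'\<in>Sub_k (card (gV G)) G. gibbs_potential P c (card (gV G)) G') = -\<infinity>"
    using Sub_k_card_self[OF assms(1,2)] assms(4) by (simp add: gibbs_potential_def)
  show "\<forall>k\<in>{1..card (gV G)}. (\<Sum>G'\<in>Sub_k k G. gibbs_potential P c k G') \<noteq> \<infinity>"
    using finite_Sub_k[OF assms(2)] by (simp add: sum_Pinfty gibbs_potential_not_PInfty)
qed simp

theorem theorem2p1:
  fixes \<G> :: "('v::countable, 'e::zero) graph set"
    and P :: "('v, 'e) graph pmf"
  assumes graphs: "\<forall>G\<in>\<G>. is_graph G"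
    and countable_space: "countable \<G>"
    and proj: "projectable \<G>"
    and fin: "\<forall>G\<in>\<G>. finite (gV G)"
    and support: "set_pmf P \<subseteq> \<G>"
    and positivity: "\<forall>G\<in>\<G>. pmf P G > 0 \<longrightarrow> (\<forall>G'\<in>Sub G. pmf P G' > 0)"
  shows "\<exists>(\<psi>0::real) (\<psi>::nat \<Rightarrow> ('v, 'e) graph \<Rightarrow> ereal).
           (\<forall>k G. \<psi> k G \<noteq> \<infinity>) \<and>
           (\<forall>G\<in>\<G>. pmf P G =
              exp_ereal (ereal \<psi>0 + (\<Sum>k\<in>{1..card (gV G)}. \<Sum>G'\<in>Sub_k k G. \<psi> k G')))"
proof -
  define c where "c = ln (pmf P ({}, \<lambda>_ _. 0))"
  obtain G0 where "G0 \<in> set_pmf P"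
    using set_pmf_not_empty[of P] by blast
  moreover have "({}, \<lambda>_ _. 0) \<in> Sub G0"
    using induced_empty[of G0] unfolding Sub_def by force
  ultimately have empty_pos: "pmf P ({}, \<lambda>_ _. 0) > 0"
    using support positivity by (auto simp: pmf_positive)
  have "pmf P G = exp_ereal (ereal c +
          (\<Sum>k\<in>{1..card (gV G)}. \<Sum>G'\<in>Sub_k k G. gibbs_potential P c k G'))"
    if "G \<in> \<G>" for G
  proof (cases "gV G = {}")
    case True
    then have "G = ({}, \<lambda>_ _. 0)"
      using is_graph_no_vertices graphs that by blast
    then show ?thesis
      using True empty_pos by (simp add: exp_ereal_def c_def)
  next
    case nonempty: False
    show ?thesis
    proof (cases "pmf P G = 0")
      case True
      then show ?thesis
        using gibbs_exponent_zero[of G P c] graphs fin that nonempty by (simp add: exp_ereal_def)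
    next
      case False
      then have "pmf P G > 0"
        by (simp add: order_less_le)
      then show ?thesis
        using gibbs_exponent_positive[of G P c] graphs fin positivity that nonempty
        by (simp add: exp_ereal_def)
    qed
  qed
  then show ?thesis
    using gibbs_potential_not_PInfty by blast
qed

end
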